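(* Let $r\geq 3$. If a $2$-connected $r$-graph $G$ has a $2$-vertex-cut, then either $G$ has a non-trivial tight edge-cut or the underlying simple graph $G_s$ is a circuit of length $4$.
   Context: Graphs are finite, may have parallel edges but no loops. $\partial_G(X)$ is the set of edges with exactly one end in $X\subseteq V(G)$. An $r$-graph is an $r$-regular graph $G$ with $|\partial_G(X)|\geq r$ for every $X\subseteq V(G)$ of odd cardinality. An edge-cut $\partial_G(X)$ of an $r$-graph $G$ is a non-trivial tight edge-cut if $|X|$ is odd, $|\partial_G(X)|=r$, and $|X|>1$ and $|V(G)\setminus X|>1$. $G_s$ is the underlying simple graph of $G$. A $2$-vertex-cut is a set of $2$ vertices whose removal increases the number of components. *)

theory Defs
  imports Main
begin

text \<open>Parallel edges are distinct elements of E with equal ends.\<close>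

definition multigraph :: "'a set \<Rightarrow> 'e set \<Rightarrow> ('e \<Rightarrow> 'a set) \<Rightarrow> bool" where
  "multigraph V E ends \<longleftrightarrow> finite V \<and> finite E \<and>
     (\<forall>e\<in>E. ends e \<subseteq> V \<and> card (ends e) = 2)"

definition degree :: "'e set \<Rightarrow> ('e \<Rightarrow> 'a set) \<Rightarrow> 'a \<Rightarrow> nat" where
  "degree E ends v = card {e\<in>E. v \<in> ends e}"

definition edge_cut :: "'e set \<Rightarrow> ('e \<Rightarrow> 'a set) \<Rightarrow> 'a set \<Rightarrow> 'e set" where
  "edge_cut E ends X = {e\<in>E. card (ends e \<inter> X) = 1}"

definition r_graph :: "nat \<Rightarrow> 'a set \<Rightarrow> 'e set \<Rightarrow> ('e \<Rightarrow> 'a set) \<Rightarrow> bool" where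
  "r_graph r V E ends \<longleftrightarrow> multigraph V E ends \<and>
     (\<forall>v\<in>V. degree E ends v = r) \<and>
     (\<forall>X. X \<subseteq> V \<and> odd (card X) \<longrightarrow> card (edge_cut E ends X) \<ge> r)"

definition nontrivial_tight_cut ::
  "nat \<Rightarrow> 'a set \<Rightarrow> 'e set \<Rightarrow> ('e \<Rightarrow> 'a set) \<Rightarrow> 'a set \<Rightarrow> bool" where
  "nontrivial_tight_cut r V E ends X \<longleftrightarrow> X \<subseteq> V \<and> odd (card X) \<and>
     card (edge_cut E ends X) = r \<and> card X > 1 \<and> card (V - X) > 1"

definition adj_in :: "'e set \<Rightarrow> ('e \<Rightarrow> 'a set) \<Rightarrow> 'a set \<Rightarrow> 'a \<Rightarrow> 'a \<Rightarrow> bool" where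
  "adj_in E ends W u v \<longleftrightarrow> u \<in> W \<and> v \<in> W \<and> (\<exists>e\<in>E. ends e = {u, v})"

definition reach_in :: "'e set \<Rightarrow> ('e \<Rightarrow> 'a set) \<Rightarrow> 'a set \<Rightarrow> 'a \<Rightarrow> 'a \<Rightarrow> bool" where
  "reach_in E ends W = (adj_in E ends W)\<^sup>*\<^sup>*"

definition num_components :: "'e set \<Rightarrow> ('e \<Rightarrow> 'a set) \<Rightarrow> 'a set \<Rightarrow> nat" where
  "num_components E ends W = card ((\<lambda>v. {u. reach_in E ends W v u}) ` W)"

definition connected_in :: "'e set \<Rightarrow> ('e \<Rightarrow> 'a set) \<Rightarrow> 'a set \<Rightarrow> bool" where
  "connected_in E ends W \<longleftrightarrow> num_components E ends W = 1"

text \<open>2-connected (Diestel): more than 2 vertices and G - X connected whenever |X| < 2.\<close>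
definition two_connected :: "'a set \<Rightarrow> 'e set \<Rightarrow> ('e \<Rightarrow> 'a set) \<Rightarrow> bool" where
  "two_connected V E ends \<longleftrightarrow> card V > 2 \<and>
     (\<forall>X. X \<subseteq> V \<and> card X < 2 \<longrightarrow> connected_in E ends (V - X))"

definition two_vertex_cut :: "'a set \<Rightarrow> 'e set \<Rightarrow> ('e \<Rightarrow> 'a set) \<Rightarrow> 'a set \<Rightarrow> bool" where
  "two_vertex_cut V E ends S \<longleftrightarrow> S \<subseteq> V \<and> card S = 2 \<and>
     num_components E ends (V - S) > num_components E ends V"

definition simple_adj :: "'e set \<Rightarrow> ('e \<Rightarrow> 'a set) \<Rightarrow> 'a \<Rightarrow> 'a \<Rightarrow> bool" where
  "simple_adj E ends u v \<longleftrightarrow> (\<exists>e\<in>E. ends e = {u, v})"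

definition underlying_is_C4 :: "'a set \<Rightarrow> 'e set \<Rightarrow> ('e \<Rightarrow> 'a set) \<Rightarrow> bool" where
  "underlying_is_C4 V E ends \<longleftrightarrow> (\<exists>a b c d. distinct [a, b, c, d] \<and> V = {a, b, c, d} \<and>
     {{u, v} | u v. simple_adj E ends u v} = {{a, b}, {b, c}, {c, d}, {d, a}})"

end

theory Submission
  imports Defs
begin

text \<open>Let \<open>{x, y}\<close> be the 2-vertex-cut, \<open>C\<^sub>1\<close> a component of \<open>G - {x, y}\<close> and \<open>C\<^sub>2\<close> the
  rest, so that no edge joins \<open>C\<^sub>1\<close> and \<open>C\<^sub>2\<close>. Counting the ends of every edge gives
  \<open>d(x) + d(y) = |\<partial>C\<^sub>1| + |\<partial>C\<^sub>2| + 2m = |\<partial>(C\<^sub>1 + x)| + |\<partial>(C\<^sub>1 + y)|\<close>, where \<open>m\<close> is the number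
  of edges joining \<open>x\<close> and \<open>y\<close>, and the left-hand side is \<open>2r\<close>. As \<open>|V|\<close> is even, either
  \<open>C\<^sub>1\<close> and \<open>C\<^sub>2\<close> are both odd: then both cuts are tight and \<open>m = 0\<close>, so one of them is a
  nontrivial tight cut unless \<open>C\<^sub>1\<close> and \<open>C\<^sub>2\<close> are single vertices, in which case
  2-connectivity makes both adjacent to \<open>x\<close> and to \<open>y\<close> and \<open>G\<^sub>s\<close> is a 4-circuit.
  Or \<open>C\<^sub>1\<close> is even: then \<open>C\<^sub>1 + x\<close> and \<open>C\<^sub>1 + y\<close> are odd, their cuts sum to \<open>2r\<close>, and
  \<open>C\<^sub>1 + x\<close> is a nontrivial tight cut.\<close>

definition no_edge_between :: "'e set \<Rightarrow> ('e \<Rightarrow> 'a set) \<Rightarrow> 'a set \<Rightarrow> 'a set \<Rightarrow> bool" where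
  "no_edge_between E ends A B \<longleftrightarrow> (\<forall>e\<in>E. ends e \<inter> A = {} \<or> ends e \<inter> B = {})"

lemma multigraph_edgeE:
  assumes "multigraph V E ends" "e \<in> E"
  obtains p q where "ends e = {p, q}" "p \<noteq> q" "p \<in> V" "q \<in> V"
  using assms unfolding multigraph_def by (metis card_2_iff insert_subset)

lemma reach_in_mem:
  assumes "reach_in E ends W v q" "v \<in> W"
  shows "q \<in> W"
  using assms(1) unfolding reach_in_def
  by (induction rule: rtranclp_induct) (use assms(2) in \<open>auto simp: adj_in_def\<close>)

lemma reach_in_sym:
  assumes "reach_in E ends W v q"
  shows "reach_in E ends W q v"
proof -
  have "symp (adj_in E ends W)" by (auto simp: symp_def adj_in_def insert_commute)
  then show ?thesis using assms unfolding reach_in_def by (meson sympD symp_rtranclp)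
qed

lemma reach_in_component_eq:
  assumes "reach_in E ends W v v'"
  shows "{u. reach_in E ends W v u} = {u. reach_in E ends W v' u}"
  using assms reach_in_sym[OF assms] unfolding reach_in_def
  by (auto intro: rtranclp_trans)

lemma connected_in_neighbour:
  assumes "connected_in E ends W" "z \<in> W" "s \<in> W" "z \<noteq> s"
  obtains q where "adj_in E ends W z q"
proof -
  let ?comp = "\<lambda>v. {u. reach_in E ends W v u}"
  obtain c where c: "?comp ` W = {c}"
    using assms(1) card_1_singletonE unfolding connected_in_def num_components_def by blast
  have "?comp z \<in> {c}" "?comp s \<in> {c}"
    using imageI[of _ W ?comp] assms(2,3) unfolding c by blast+
  moreover have "s \<in> ?comp s"
    by (simp add: reach_in_def)
  ultimately have "s \<in> ?comp z"
    by simp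
  then have "reach_in E ends W z s" by simp
  then show ?thesis
    using assms(4) unfolding reach_in_def by (cases rule: converse_rtranclpE) (auto intro: that)
qed

lemma disconnected_split:
  assumes "multigraph V E ends" "W \<subseteq> V" "num_components E ends W > 1"
  obtains C where "C \<subseteq> W" "C \<noteq> {}" "W - C \<noteq> {}" "no_edge_between E ends C (W - C)"
proof -
  define comp where "comp v = {u. reach_in E ends W v u}" for v
  have "finite (comp ` W)"
    using assms(1,2) finite_subset by (auto simp: multigraph_def)
  moreover have "\<not> card (comp ` W) \<le> Suc 0"
    using assms(3) by (simp add: num_components_def comp_def)
  ultimately have "\<exists>A\<in>comp ` W. \<exists>B\<in>comp ` W. A \<noteq> B"
    by (simp add: card_le_Suc0_iff_eq)
  then obtain v v' where v: "v \<in> W" "v' \<in> W" "comp v \<noteq> comp v'"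
    by auto
  define C where "C = comp v"
  have "C \<subseteq> W" by (auto simp: C_def comp_def intro: reach_in_mem[OF _ v(1)])
  moreover have "v \<in> C" by (simp add: C_def comp_def reach_in_def)
  moreover have "v' \<notin> C"
  proof
    assume "v' \<in> C"
    then have "comp v = comp v'" by (simp add: C_def comp_def reach_in_component_eq)
    with v(3) show False by contradiction
  qed
  moreover have "no_edge_between E ends C (W - C)"
    unfolding no_edge_between_def
  proof (intro ballI, rule ccontr)
    fix e assume "e \<in> E" "\<not> (ends e \<inter> C = {} \<or> ends e \<inter> (W - C) = {})"
    then obtain p q where pq: "p \<in> ends e" "p \<in> C" "q \<in> ends e" "q \<in> W - C"
      by blast
    obtain a b where "ends e = {a, b}"
      using multigraph_edgeE[OF assms(1) \<open>e \<in> E\<close>] by blast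
    moreover have "p \<noteq> q" using pq by blast
    ultimately have "ends e = {p, q}" using pq by auto
    then have "adj_in E ends W p q"
      using pq \<open>C \<subseteq> W\<close> \<open>e \<in> E\<close> by (auto simp: adj_in_def)
    moreover have "reach_in E ends W v p" using pq(2) by (simp add: C_def comp_def)
    ultimately have "q \<in> C"
      unfolding C_def comp_def reach_in_def by (simp add: rtranclp.rtrancl_into_rtrancl)
    with pq(4) show False by blast
  qed
  ultimately show ?thesis
    by (intro that[of C]) (use v(2) in blast)+
qed

lemma card_doubleton_Int_eq_1_iff:
  "p \<noteq> q \<Longrightarrow> card ({p, q} \<inter> X) = 1 \<longleftrightarrow> (p \<in> X \<longleftrightarrow> q \<notin> X)"
  by (cases "p \<in> X"; cases "q \<in> X") auto

lemma r_graph_even_card: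
  assumes "r_graph r V E ends" "r > 0"
  shows "even (card V)"
proof (rule ccontr)
  assume "odd (card V)"
  then have "card (edge_cut E ends V) \<ge> r"
    using assms(1) by (auto simp: r_graph_def)
  moreover have "edge_cut E ends V = {}"
    using assms(1) by (auto simp: r_graph_def multigraph_def edge_cut_def Int_absorb2)
  ultimately show False
    using assms(2) by simp
qed

lemma simple_adj_commute: "simple_adj E ends u v \<longleftrightarrow> simple_adj E ends v u"
  by (auto simp: simple_adj_def insert_commute)

lemma underlying_is_C4I:
  assumes "multigraph V E ends" "V = {a, b, c, d}" "distinct [a, b, c, d]"
    and "\<forall>e\<in>E. ends e \<noteq> {a, c} \<and> ends e \<noteq> {b, d}"
    and "simple_adj E ends a b" "simple_adj E ends b c" "simple_adj E ends c d" "simple_adj E ends d a"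
  shows "underlying_is_C4 V E ends"
  unfolding underlying_is_C4_def
proof (intro exI conjI)
  show "{{p, q} |p q. simple_adj E ends p q} = {{a, b}, {b, c}, {c, d}, {d, a}}"
  proof
    show "{{p, q} |p q. simple_adj E ends p q} \<subseteq> {{a, b}, {b, c}, {c, d}, {d, a}}"
    proof
      fix S assume "S \<in> {{p, q} |p q. simple_adj E ends p q}"
      then obtain e where e: "e \<in> E" "S = ends e"
        by (auto simp: simple_adj_def)
      then obtain p q where "S = {p, q}" "p \<noteq> q" "p \<in> V" "q \<in> V"
        using multigraph_edgeE[OF assms(1)] by metis
      then show "S \<in> {{a, b}, {b, c}, {c, d}, {d, a}}"
        using assms(2-4) e by (auto simp: doubleton_eq_iff)
    qed
    show "{{a, b}, {b, c}, {c, d}, {d, a}} \<subseteq> {{p, q} |p q. simple_adj E ends p q}"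
      using assms(5-8) by blast
  qed
qed (use assms(2,3) in auto)

locale separation =
  fixes V :: "'a set" and E :: "'e set" and ends :: "'e \<Rightarrow> 'a set"
    and x y :: 'a and C1 C2 :: "'a set"
  assumes multigraph: "multigraph V E ends"
    and V_eq: "V = C1 \<union> C2 \<union> {x, y}"
    and x_ne_y: "x \<noteq> y"
    and x_notin: "x \<notin> C1" "x \<notin> C2"
    and y_notin: "y \<notin> C1" "y \<notin> C2"
    and disjoint: "C1 \<inter> C2 = {}"
    and nonempty: "C1 \<noteq> {}" "C2 \<noteq> {}"
    and no_edge: "no_edge_between E ends C1 C2"
begin

lemma finite_parts: "finite V" "finite E" "finite C1" "finite C2"
  using multigraph V_eq by (auto simp: multigraph_def)

lemma card_V: "card V = card C1 + card C2 + 2"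
  using V_eq finite_parts disjoint x_ne_y x_notin y_notin by (simp add: card_Un_disjoint)

lemma edge_incidences:
  assumes "e \<in> E"
  shows "(of_bool (x \<in> ends e) :: nat) + of_bool (y \<in> ends e) =
      of_bool (e \<in> edge_cut E ends C1) + of_bool (e \<in> edge_cut E ends C2) +
      2 * of_bool (ends e = {x, y})"
    and "(of_bool (x \<in> ends e) :: nat) + of_bool (y \<in> ends e) =
      of_bool (e \<in> edge_cut E ends (insert x C1)) + of_bool (e \<in> edge_cut E ends (insert y C1))"
proof -
  obtain p q where pq: "ends e = {p, q}" "p \<noteq> q" "p \<in> V" "q \<in> V"
    using multigraph_edgeE[OF multigraph assms] .
  have "\<not> (p \<in> C1 \<and> q \<in> C2)" "\<not> (p \<in> C2 \<and> q \<in> C1)"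
    using no_edge assms pq(1) by (auto simp: no_edge_between_def)
  moreover have "p \<in> C1 \<or> p \<in> C2 \<or> p = x \<or> p = y" "q \<in> C1 \<or> q \<in> C2 \<or> q = x \<or> q = y"
    using pq V_eq by auto
  ultimately have "(of_bool (x \<in> {p, q}) :: nat) + of_bool (y \<in> {p, q}) =
      of_bool (p \<in> C1 \<longleftrightarrow> q \<notin> C1) + of_bool (p \<in> C2 \<longleftrightarrow> q \<notin> C2) +
      2 * of_bool ({p, q} = {x, y}) \<and>
    (of_bool (x \<in> {p, q}) :: nat) + of_bool (y \<in> {p, q}) =
      of_bool (p \<in> insert x C1 \<longleftrightarrow> q \<notin> insert x C1) +
      of_bool (p \<in> insert y C1 \<longleftrightarrow> q \<notin> insert y C1)"
    using pq(2) x_ne_y x_notin y_notin disjoint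
    by (elim disjE) (auto simp: doubleton_eq_iff)
  moreover have "e \<in> edge_cut E ends X \<longleftrightarrow> (p \<in> X \<longleftrightarrow> q \<notin> X)" for X
    using assms pq(1,2) card_doubleton_Int_eq_1_iff by (simp add: edge_cut_def)
  ultimately show "(of_bool (x \<in> ends e) :: nat) + of_bool (y \<in> ends e) =
      of_bool (e \<in> edge_cut E ends C1) + of_bool (e \<in> edge_cut E ends C2) +
      2 * of_bool (ends e = {x, y})"
    and "(of_bool (x \<in> ends e) :: nat) + of_bool (y \<in> ends e) =
      of_bool (e \<in> edge_cut E ends (insert x C1)) + of_bool (e \<in> edge_cut E ends (insert y C1))"
    unfolding pq(1) by simp_all
qed

lemma degree_sum_eq_cut_sum:
  "degree E ends x + degree E ends y =
     card (edge_cut E ends C1) + card (edge_cut E ends C2) + 2 * card {e\<in>E. ends e = {x, y}}"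
  "degree E ends x + degree E ends y =
     card (edge_cut E ends (insert x C1)) + card (edge_cut E ends (insert y C1))"
proof -
  have card_eq: "card A = (\<Sum>e\<in>E. of_bool (e \<in> A))" if "A \<subseteq> E" for A
    using finite_parts(2) that by (simp add: Int_absorb1)
  have cut_sub: "edge_cut E ends X \<subseteq> E" for X
    by (auto simp: edge_cut_def)
  have degrees: "degree E ends x + degree E ends y =
      (\<Sum>e\<in>E. of_bool (x \<in> ends e) + of_bool (y \<in> ends e))"
    unfolding degree_def by (subst (1 2) card_eq) (auto simp: sum.distrib)
  show "degree E ends x + degree E ends y =
     card (edge_cut E ends C1) + card (edge_cut E ends C2) + 2 * card {e\<in>E. ends e = {x, y}}"
    unfolding degrees card_eq[OF cut_sub]
    using finite_parts(2)
    by (simp add: edge_incidences(1) sum.distrib Collect_conj_eq flip: sum_distrib_left)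
  show "degree E ends x + degree E ends y =
     card (edge_cut E ends (insert x C1)) + card (edge_cut E ends (insert y C1))"
    unfolding degrees card_eq[OF cut_sub]
    by (simp add: edge_incidences(2) sum.distrib)
qed

lemma card_complement_sides: "card (V - C1) \<ge> 2" "card (V - C2) \<ge> 2"
proof -
  have "{x, y} \<subseteq> V - C1" "{x, y} \<subseteq> V - C2"
    using V_eq x_notin y_notin by auto
  then show "card (V - C1) \<ge> 2" "card (V - C2) \<ge> 2"
    using card_mono[OF _ \<open>{x, y} \<subseteq> V - C1\<close>] card_mono[OF _ \<open>{x, y} \<subseteq> V - C2\<close>]
      finite_parts(1) x_ne_y by auto
qed

lemma odd_sides_tight:
  assumes "r_graph r V E ends" "r > 0" "odd (card C1)"
  shows "odd (card C2)" "card (edge_cut E ends C1) = r" "card (edge_cut E ends C2) = r"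
    and "\<forall>e\<in>E. ends e \<noteq> {x, y}"
proof -
  show odd2: "odd (card C2)"
    using r_graph_even_card[OF assms(1,2)] card_V assms(3) by simp
  have "card (edge_cut E ends C1) \<ge> r" "card (edge_cut E ends C2) \<ge> r"
    using assms(1,3) odd2 V_eq by (auto simp: r_graph_def)
  moreover have "degree E ends x + degree E ends y = 2 * r"
    using assms(1) V_eq by (simp add: r_graph_def)
  ultimately have "card (edge_cut E ends C1) = r \<and> card (edge_cut E ends C2) = r \<and>
      card {e\<in>E. ends e = {x, y}} = 0"
    using degree_sum_eq_cut_sum(1) by linarith
  then show "card (edge_cut E ends C1) = r" "card (edge_cut E ends C2) = r"
    and "\<forall>e\<in>E. ends e \<noteq> {x, y}"
    using finite_parts(2) by simp_all
qed

lemma even_side_tight: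
  assumes "r_graph r V E ends" "r > 0" "even (card C1)"
  shows "nontrivial_tight_cut r V E ends (insert x C1)"
proof -
  have odd: "odd (card (insert x C1))" "odd (card (insert y C1))"
    using assms(3) finite_parts(3) x_notin y_notin by simp_all
  then have "card (edge_cut E ends (insert x C1)) \<ge> r" "card (edge_cut E ends (insert y C1)) \<ge> r"
    using assms(1) V_eq by (auto simp: r_graph_def)
  moreover have "degree E ends x + degree E ends y = 2 * r"
    using assms(1) V_eq by (simp add: r_graph_def)
  ultimately have "card (edge_cut E ends (insert x C1)) = r"
    using degree_sum_eq_cut_sum(2) by linarith
  moreover have "card (insert x C1) > 1"
    using nonempty(1) finite_parts(3) x_notin by (simp add: card_gt_0_iff)
  moreover have "V - insert x C1 = insert y C2"
    using V_eq x_ne_y x_notin y_notin disjoint by auto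
  then have "card (V - insert x C1) > 1"
    using nonempty(2) finite_parts(4) y_notin by (simp add: card_gt_0_iff)
  ultimately show ?thesis
    using odd(1) V_eq by (auto simp: nontrivial_tight_cut_def)
qed

lemma singleton_sides_adjacent:
  assumes "C1 = {u}" "C2 = {w}" "connected_in E ends (V - {t})" "{s, t} = {x, y}" "z \<in> {u, w}"
  shows "simple_adj E ends z s"
proof -
  have "z \<in> V - {t}" "s \<in> V - {t}" "z \<noteq> s"
    using assms V_eq x_ne_y x_notin y_notin by (auto simp: doubleton_eq_iff)
  then obtain q where "adj_in E ends (V - {t}) z q"
    using connected_in_neighbour[OF assms(3)] by blast
  then obtain e where e: "e \<in> E" "ends e = {z, q}" "q \<in> V - {t}"
    by (auto simp: adj_in_def)
  have "card (ends e) = 2"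
    using e(1) multigraph by (simp add: multigraph_def)
  with e(2) have "q \<noteq> z"
    by auto
  moreover have "q \<notin> {u, w}"
    using e assms(1,2,5) no_edge \<open>q \<noteq> z\<close> by (auto simp: no_edge_between_def)
  ultimately have "q = s"
    using e(3) assms V_eq by (auto simp: doubleton_eq_iff)
  then show ?thesis
    using e by (auto simp: simple_adj_def)
qed

lemma tight_cut_or_C4:
  assumes "r_graph r V E ends" "r > 0"
    and "connected_in E ends (V - {x})" "connected_in E ends (V - {y})"
  shows "(\<exists>X. nontrivial_tight_cut r V E ends X) \<or> underlying_is_C4 V E ends"
proof (cases "odd (card C1)")
  case False
  then show ?thesis
    using even_side_tight[OF assms(1,2)] by blast
next
  case True
  note tight = odd_sides_tight[OF assms(1,2) True]
  have "card C1 \<ge> 1" "card C2 \<ge> 1"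
    using nonempty finite_parts(3,4) by (auto simp: Suc_le_eq card_gt_0_iff)
  then consider "card C1 > 1" | "card C2 > 1" | u w where "C1 = {u}" "C2 = {w}"
    by (metis card_1_singletonE le_neq_implies_less)
  then show ?thesis
  proof cases
    case 1
    then have "nontrivial_tight_cut r V E ends C1"
      using True tight card_complement_sides V_eq by (auto simp: nontrivial_tight_cut_def)
    then show ?thesis by blast
  next
    case 2
    then have "nontrivial_tight_cut r V E ends C2"
      using tight card_complement_sides V_eq by (auto simp: nontrivial_tight_cut_def)
    then show ?thesis by blast
  next
    case (3 u w)
    have "underlying_is_C4 V E ends"
    proof (rule underlying_is_C4I[OF multigraph, of u x w y])
      show "V = {u, x, w, y}" "distinct [u, x, w, y]"
        using V_eq 3 disjoint x_ne_y x_notin y_notin by auto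
      show "\<forall>e\<in>E. ends e \<noteq> {u, w} \<and> ends e \<noteq> {x, y}"
        using tight(4) no_edge 3 by (auto simp: no_edge_between_def)
      have "simple_adj E ends z x" "simple_adj E ends z y" if "z \<in> {u, w}" for z
        using singleton_sides_adjacent[OF 3 assms(4) _ that, where s = x]
          singleton_sides_adjacent[OF 3 assms(3) _ that, where s = y]
        by (simp_all add: insert_commute)
      then show "simple_adj E ends u x" "simple_adj E ends x w" "simple_adj E ends w y"
        "simple_adj E ends y u"
        by (auto simp: simple_adj_commute)
    qed
    then show ?thesis ..
  qed
qed

end

theorem lemma2p5:
  fixes r :: nat and V :: "'a set" and E :: "'e set" and ends :: "'e \<Rightarrow> 'a set"
  assumes "r \<ge> 3"
    and "r_graph r V E ends"
    and "two_connected V E ends"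
    and "\<exists>S. two_vertex_cut V E ends S"
  shows "(\<exists>X. nontrivial_tight_cut r V E ends X) \<or> underlying_is_C4 V E ends"
proof -
  have multigraph: "multigraph V E ends"
    using assms(2) by (simp add: r_graph_def)
  have connected: "connected_in E ends (V - X)" if "X \<subseteq> V" "card X < 2" for X
    using assms(3) that by (simp add: two_connected_def)
  obtain x y where cut: "two_vertex_cut V E ends {x, y}" "x \<noteq> y"
  proof -
    obtain S where "two_vertex_cut V E ends S"
      using assms(4) by blast
    moreover from this obtain x y where "S = {x, y}" "x \<noteq> y"
      by (auto simp: two_vertex_cut_def card_2_iff)
    ultimately show ?thesis
      using that by blast
  qed
  then have "{x, y} \<subseteq> V"
    by (simp add: two_vertex_cut_def)
  have "num_components E ends V = 1"
    using connected[of "{}"] by (simp add: connected_in_def)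
  with cut(1) have "num_components E ends (V - {x, y}) > 1"
    by (simp add: two_vertex_cut_def)
  then obtain C where C: "C \<subseteq> V - {x, y}" "C \<noteq> {}" "V - {x, y} - C \<noteq> {}"
      "no_edge_between E ends C (V - {x, y} - C)"
    by (rule disconnected_split[OF multigraph Diff_subset])
  interpret separation V E ends x y C "V - {x, y} - C"
    using multigraph cut(2) C \<open>{x, y} \<subseteq> V\<close> by unfold_locales auto
  show ?thesis
    using tight_cut_or_C4[OF assms(2)] assms(1) connected[of "{x}"] connected[of "{y}"]
      \<open>{x, y} \<subseteq> V\<close>
    by simp
qed

end
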